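(* Let $X\subseteq\mathbb{C}^n$ be a complex analytic variety, $x\in X$, and $M$ an $\mathcal{O}_{X,x}$-submodule of $\mathcal{O}_{X,x}^p$. Then $M_{S_1}\subseteq M_{S_2}$.
   Context: $\pi_1,\pi_2:X\times X\to X$ are the projections. For $h\in\mathcal{O}_{X,x}^p$ (or $\mathcal{O}_{X,x}$), $h_D=(h\circ\pi_1,h\circ\pi_2)$; for a submodule $M$ (or ideal), $M_D$ is the submodule over $\mathcal{O}_{X\times X,(x,x)}$ generated by $\{h_D:h\in M\}$. $\overline{N}$ is integral closure. For an ideal $I$, $I_S$ is its Lipschitz saturation, characterized by $f\in I_S$ iff $f_D\in\overline{I_D}$ (equivalently $\pi_S^*(f)\in\pi_S^*(I)$ for the saturated blow-up $\pi_S:SB_I(X)\to X$). For an analytic map germ $\psi=(\psi_1,\dots,\psi_p):X\to\mathrm{Hom}(\mathbb{C}^p,\mathbb{C})$, $\psi\cdot h=\sum_i\psi_ih_i$ and $\psi\cdot M$ is the ideal generated by $\{\psi\cdot g:g\in M\}$. $M_{S_1}=\{h: h_D\in\overline{M_D}\}$; $M_{S_2}=\{h:\psi\cdot h\in(\psi\cdot M)_S\ \forall\psi\}$. *)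

theory Defs
  imports "HOL-Analysis.Analysis"
begin

definition cJ :: "complex^'n \<Rightarrow> complex^'n" where
  "cJ v = \<i> *s v"

definition cJ2 :: "(complex^'n) \<times> (complex^'n) \<Rightarrow> (complex^'n) \<times> (complex^'n)" where
  "cJ2 w = (\<i> *s fst w, \<i> *s snd w)"

definition holo_on :: "('a::real_normed_vector \<Rightarrow> 'a) \<Rightarrow> 'a set \<Rightarrow> ('a \<Rightarrow> complex) \<Rightarrow> bool" where
  "holo_on J U f \<longleftrightarrow> open U \<and>
     (\<forall>z\<in>U. \<exists>D. (f has_derivative D) (at z) \<and> (\<forall>v. D (J v) = \<i> * D v))"

definition germ_at :: "('a::real_normed_vector \<Rightarrow> 'a) \<Rightarrow> 'a \<Rightarrow> ('a \<Rightarrow> complex) \<Rightarrow> bool" where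
  "germ_at J y f \<longleftrightarrow> (\<exists>U. y \<in> U \<and> holo_on J U f)"

definition vgerm_at :: "('a::real_normed_vector \<Rightarrow> 'a) \<Rightarrow> 'a \<Rightarrow> ('a \<Rightarrow> 'i \<Rightarrow> complex) \<Rightarrow> bool" where
  "vgerm_at J y h \<longleftrightarrow> (\<forall>i. germ_at J y (\<lambda>z. h z i))"

text \<open>Equality of germs on the variety Y at y (i.e. equality in O_{Y,y}).\<close>

definition germ_eq_on :: "'a::topological_space set \<Rightarrow> 'a \<Rightarrow> ('a \<Rightarrow> 'b) \<Rightarrow> ('a \<Rightarrow> 'b) \<Rightarrow> bool" where
  "germ_eq_on Y y f g \<longleftrightarrow> (\<exists>U. open U \<and> y \<in> U \<and> (\<forall>z\<in>U \<inter> Y. f z = g z))"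

definition analytic_variety :: "(complex^'n) set \<Rightarrow> bool" where
  "analytic_variety X \<longleftrightarrow>
     (\<forall>z\<in>X. \<exists>U (k::nat) g. z \<in> U \<and> (\<forall>j<k. holo_on cJ U (g j)) \<and>
        X \<inter> U = {w\<in>U. \<forall>j<k. g j w = 0})"

text \<open>O_{Y,y}-submodule of O_{Y,y}^I, represented by the set of all its representatives.\<close>

definition is_submodule :: "('a::real_normed_vector \<Rightarrow> 'a) \<Rightarrow> 'a set \<Rightarrow> 'a \<Rightarrow> ('a \<Rightarrow> 'i \<Rightarrow> complex) set \<Rightarrow> bool" where
  "is_submodule J Y y M \<longleftrightarrow>
     (\<forall>h\<in>M. vgerm_at J y h) \<and> (\<lambda>z i. 0) \<in> M \<and>
     (\<forall>g\<in>M. \<forall>h\<in>M. (\<lambda>z i. g z i + h z i) \<in> M) \<and>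
     (\<forall>a. \<forall>h\<in>M. germ_at J y a \<longrightarrow> (\<lambda>z i. a z * h z i) \<in> M) \<and>
     (\<forall>h\<in>M. \<forall>g. vgerm_at J y g \<and> germ_eq_on Y y g h \<longrightarrow> g \<in> M)"

definition gen_mod :: "('a::real_normed_vector \<Rightarrow> 'a) \<Rightarrow> 'a set \<Rightarrow> 'a \<Rightarrow> ('a \<Rightarrow> 'i \<Rightarrow> complex) set \<Rightarrow> ('a \<Rightarrow> 'i \<Rightarrow> complex) set" where
  "gen_mod J Y y S = {h. vgerm_at J y h \<and>
     (\<exists>(k::nat) a g. (\<forall>j<k. germ_at J y (a j) \<and> g j \<in> S) \<and>
        germ_eq_on Y y h (\<lambda>z i. \<Sum>j<k. a j z * g j z i))}"

definition curve_at :: "('a::real_normed_vector \<Rightarrow> 'a) \<Rightarrow> 'a set \<Rightarrow> 'a \<Rightarrow> (complex \<Rightarrow> 'a) \<Rightarrow> bool" where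
  "curve_at J Y y \<phi> \<longleftrightarrow> \<phi> 0 = y \<and>
     (\<exists>U. open U \<and> 0 \<in> U \<and> \<phi> ` U \<subseteq> Y \<and>
        (\<forall>t\<in>U. \<exists>D. (\<phi> has_derivative D) (at t) \<and> (\<forall>s. D (\<i> * s) = J (D s))))"

text \<open>Integral closure of a submodule N of O_{Y,y}^I (curve criterion / Gaffney's definition):
  h is in the closure iff for every curve phi, h o phi lies in the O_1-module phi^*(N) O_1.\<close>

definition int_cl :: "('a::real_normed_vector \<Rightarrow> 'a) \<Rightarrow> 'a set \<Rightarrow> 'a \<Rightarrow> ('a \<Rightarrow> 'i \<Rightarrow> complex) set \<Rightarrow> ('a \<Rightarrow> 'i \<Rightarrow> complex) set" where
  "int_cl J Y y N = {h. vgerm_at J y h \<and>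
     (\<forall>\<phi>. curve_at J Y y \<phi> \<longrightarrow>
       (\<exists>(k::nat) a g. (\<forall>j<k. (\<exists>U. open U \<and> 0 \<in> U \<and> a j holomorphic_on U) \<and> g j \<in> N) \<and>
          (\<forall>\<^sub>F t in nhds 0. \<forall>i. h (\<phi> t) i = (\<Sum>j<k. a j t * g j (\<phi> t) i))))}"

text \<open>The double h_D = (h o pi1, h o pi2), a 2p-tuple indexed by 'i + 'i.\<close>

definition dbl :: "('b \<Rightarrow> 'i \<Rightarrow> complex) \<Rightarrow> ('b \<times> 'b \<Rightarrow> 'i + 'i \<Rightarrow> complex)" where
  "dbl h = (\<lambda>w. case_sum (h (fst w)) (h (snd w)))"

text \<open>Ideals of O_{X,x} are represented as submodules of O_{X,x}^1, i.e. index type unit.\<close>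

definition pdot :: "('b \<Rightarrow> 'p::finite \<Rightarrow> complex) \<Rightarrow> ('b \<Rightarrow> 'p \<Rightarrow> complex) \<Rightarrow> ('b \<Rightarrow> unit \<Rightarrow> complex)" where
  "pdot \<psi> h = (\<lambda>z _. \<Sum>i\<in>UNIV. \<psi> z i * h z i)"

definition lip_sat :: "(complex^'n) set \<Rightarrow> complex^'n \<Rightarrow> (complex^'n \<Rightarrow> unit \<Rightarrow> complex) set \<Rightarrow> (complex^'n \<Rightarrow> unit \<Rightarrow> complex) set" where
  "lip_sat X x I = {f. vgerm_at cJ x f \<and>
     dbl f \<in> int_cl cJ2 (X \<times> X) (x, x) (gen_mod cJ2 (X \<times> X) (x, x) (dbl ` I))}"

definition M_S1 :: "(complex^'n) set \<Rightarrow> complex^'n \<Rightarrow> (complex^'n \<Rightarrow> 'p::finite \<Rightarrow> complex) set \<Rightarrow> (complex^'n \<Rightarrow> 'p \<Rightarrow> complex) set" where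
  "M_S1 X x M = {h. vgerm_at cJ x h \<and>
     dbl h \<in> int_cl cJ2 (X \<times> X) (x, x) (gen_mod cJ2 (X \<times> X) (x, x) (dbl ` M))}"

definition M_S2 :: "(complex^'n) set \<Rightarrow> complex^'n \<Rightarrow> (complex^'n \<Rightarrow> 'p::finite \<Rightarrow> complex) set \<Rightarrow> (complex^'n \<Rightarrow> 'p \<Rightarrow> complex) set" where
  "M_S2 X x M = {h. vgerm_at cJ x h \<and>
     (\<forall>\<psi>. vgerm_at cJ x \<psi> \<longrightarrow> pdot \<psi> h \<in> lip_sat X x (gen_mod cJ X x (pdot \<psi> ` M)))}"

end

theory Submission
  imports Defs
begin

text \<open>Multiplying a tuple of germs on X by a germ \<psi> commutes with doubling, once \<psi> is doubled to
  the block-diagonal matrix diag(\<psi> o pi1, \<psi> o pi2). Multiplication by a matrix of germs maps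
  generated submodules into generated submodules and integral closures into integral closures,
  because it commutes with the finite linear combinations occurring in both definitions. The
  doubled \<psi> sends M_D into (\<psi> M)_D, hence h_D in the closure of M_D gives (\<psi> h)_D in the
  closure of (\<psi> M)_D. The argument is formal: it never uses that X is a variety.\<close>

definition holo_at :: "('a::real_normed_vector \<Rightarrow> 'a) \<Rightarrow> ('a \<Rightarrow> complex) \<Rightarrow> 'a \<Rightarrow> bool" where
  "holo_at J f z \<longleftrightarrow> (\<exists>D. (f has_derivative D) (at z) \<and> (\<forall>v. D (J v) = \<i> * D v))"

lemma germ_at_iff_eventually: "germ_at J y f \<longleftrightarrow> (\<forall>\<^sub>F z in nhds y. holo_at J f z)"
  by (auto simp: germ_at_def holo_on_def holo_at_def eventually_nhds)

lemma holo_at_const: "holo_at J (\<lambda>z. c) z"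
  unfolding holo_at_def by (auto intro!: exI[of _ "\<lambda>v. 0"])

lemma holo_at_add:
  assumes "holo_at J f z" "holo_at J g z"
  shows "holo_at J (\<lambda>z. f z + g z) z"
proof -
  obtain D1 D2 where "(f has_derivative D1) (at z)" "(g has_derivative D2) (at z)"
    and "\<forall>v. D1 (J v) = \<i> * D1 v" "\<forall>v. D2 (J v) = \<i> * D2 v"
    using assms unfolding holo_at_def by blast
  then show ?thesis
    unfolding holo_at_def
    by (intro exI[of _ "\<lambda>v. D1 v + D2 v"]) (simp add: distrib_left)
qed

lemma holo_at_mult:
  assumes "holo_at J f z" "holo_at J g z"
  shows "holo_at J (\<lambda>z. f z * g z) z"
proof -
  obtain D1 D2 where D: "(f has_derivative D1) (at z)" "(g has_derivative D2) (at z)"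
    and "\<forall>v. D1 (J v) = \<i> * D1 v" "\<forall>v. D2 (J v) = \<i> * D2 v"
    using assms unfolding holo_at_def by blast
  with has_derivative_mult[OF D] show ?thesis
    unfolding holo_at_def
    by (intro exI[of _ "\<lambda>v. f z * D2 v + D1 v * g z"]) (simp add: algebra_simps)
qed

lemma holo_at_compose_linear:
  assumes "holo_at J f (L z)" "bounded_linear L" "\<And>v. L (K v) = J (L v)"
  shows "holo_at K (\<lambda>z. f (L z)) z"
proof -
  obtain D where "(f has_derivative D) (at (L z))" "\<forall>v. D (J v) = \<i> * D v"
    using assms(1) unfolding holo_at_def by blast
  then show ?thesis
    unfolding holo_at_def using assms(2,3)
    by (intro exI[of _ "\<lambda>v. D (L v)"])
      (simp add: has_derivative_compose[OF bounded_linear_imp_has_derivative])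
qed

lemma germ_at_const: "germ_at J y (\<lambda>z. c)"
  unfolding germ_at_iff_eventually by (rule always_eventually) (simp add: holo_at_const)

lemma germ_at_add:
  assumes "germ_at J y f" "germ_at J y g"
  shows "germ_at J y (\<lambda>z. f z + g z)"
  using assms unfolding germ_at_iff_eventually by eventually_elim (rule holo_at_add)

lemma germ_at_mult:
  assumes "germ_at J y f" "germ_at J y g"
  shows "germ_at J y (\<lambda>z. f z * g z)"
  using assms unfolding germ_at_iff_eventually by eventually_elim (rule holo_at_mult)

lemma germ_at_sum:
  assumes "finite A" "\<And>i. i \<in> A \<Longrightarrow> germ_at J y (f i)"
  shows "germ_at J y (\<lambda>z. \<Sum>i\<in>A. f i z)"
  using assms
  by (induction A rule: finite_induct) (simp_all add: germ_at_const germ_at_add)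

lemma germ_at_compose_linear:
  assumes "germ_at J (L y) f" "bounded_linear L" "\<And>v. L (K v) = J (L v)"
  shows "germ_at K y (\<lambda>z. f (L z))"
proof -
  have "filterlim L (nhds (L y)) (nhds y)"
    using isCont_tendsto_compose[OF linear_continuous_at[OF assms(2)] filterlim_ident] .
  with assms(1) have "\<forall>\<^sub>F z in nhds y. holo_at J f (L z)"
    unfolding germ_at_iff_eventually by (rule eventually_compose_filterlim)
  then show ?thesis
    unfolding germ_at_iff_eventually
    by eventually_elim (rule holo_at_compose_linear[of J f L _ K, OF _ assms(2,3)])
qed

lemma cJ2_fst: "fst (cJ2 v) = cJ (fst v)" and cJ2_snd: "snd (cJ2 v) = cJ (snd v)"
  by (simp_all add: cJ2_def cJ_def)

lemma germ_at_fst: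
  "germ_at cJ y f \<Longrightarrow> germ_at cJ2 (y, y') (\<lambda>w. f (fst w))"
  by (rule germ_at_compose_linear) (simp_all add: bounded_linear_fst cJ2_fst)

lemma germ_at_snd:
  "germ_at cJ y f \<Longrightarrow> germ_at cJ2 (y', y) (\<lambda>w. f (snd w))"
  by (rule germ_at_compose_linear) (simp_all add: bounded_linear_snd cJ2_snd)

definition mat_apply :: "('b \<Rightarrow> 'j \<Rightarrow> 'i::finite \<Rightarrow> complex) \<Rightarrow> ('b \<Rightarrow> 'i \<Rightarrow> complex)
    \<Rightarrow> ('b \<Rightarrow> 'j \<Rightarrow> complex)" where
  "mat_apply C F = (\<lambda>w j. \<Sum>i\<in>UNIV. C w j i * F w i)"

lemma pdot_eq_mat_apply: "pdot \<psi> = mat_apply (\<lambda>z _. \<psi> z)"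
  by (simp add: fun_eq_iff pdot_def mat_apply_def)

definition germ_matrix :: "('a::real_normed_vector \<Rightarrow> 'a) \<Rightarrow> 'a \<Rightarrow> ('a \<Rightarrow> 'j \<Rightarrow> 'i \<Rightarrow> complex)
    \<Rightarrow> bool" where
  "germ_matrix J y C \<longleftrightarrow> (\<forall>j i. germ_at J y (\<lambda>z. C z j i))"

definition dbl_mat :: "('b \<Rightarrow> 'j \<Rightarrow> 'i \<Rightarrow> complex) \<Rightarrow> ('b \<times> 'b \<Rightarrow> 'j + 'j \<Rightarrow> 'i + 'i \<Rightarrow> complex)" where
  "dbl_mat C w = case_sum (\<lambda>j. case_sum (C (fst w) j) (\<lambda>_. 0))
                          (\<lambda>j. case_sum (\<lambda>_. 0) (C (snd w) j))"

lemma dbl_mat_apply: "dbl (mat_apply C h) = mat_apply (dbl_mat C) (dbl h)"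
  by (auto simp: fun_eq_iff dbl_def mat_apply_def dbl_mat_def
      UNIV_Plus_UNIV[symmetric] sum.Plus simp del: UNIV_Plus_UNIV split: sum.split)

lemma germ_matrix_dbl_mat:
  assumes "germ_matrix cJ y C"
  shows "germ_matrix cJ2 (y, y) (dbl_mat C)"
  unfolding germ_matrix_def
proof (intro allI)
  fix j i
  show "germ_at cJ2 (y, y) (\<lambda>z. dbl_mat C z j i)"
    using assms unfolding germ_matrix_def
    by (cases j; cases i)
      (auto simp: dbl_mat_def germ_at_const
        intro: germ_at_fst[of y "\<lambda>z. C z _ _"] germ_at_snd[of y "\<lambda>z. C z _ _"])
qed

lemma vgerm_at_mat_apply:
  assumes "germ_matrix J y C" "vgerm_at J y F"
  shows "vgerm_at J y (mat_apply C F)"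
  using assms unfolding germ_matrix_def vgerm_at_def mat_apply_def
  by (auto intro!: germ_at_sum germ_at_mult)

lemma mat_apply_lincomb:
  assumes "F w = (\<lambda>i. \<Sum>l<k. a l * G l w i)"
  shows "mat_apply C F w = (\<lambda>j. \<Sum>l<k. a l * mat_apply C (G l) w j)"
  using assms
  by (simp add: fun_eq_iff mat_apply_def sum_distrib_left mult_ac sum.swap[of _ UNIV])

lemma gen_mod_generator:
  assumes "s \<in> S" "vgerm_at J y s"
  shows "s \<in> gen_mod J Y y S"
  unfolding gen_mod_def
proof (intro CollectI conjI assms(2) exI[of _ "1::nat"] exI[of _ "\<lambda>_ _. 1"] exI[of _ "\<lambda>_. s"])
  show "\<forall>j<1::nat. germ_at J y (\<lambda>_. 1) \<and> s \<in> S"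
    using assms(1) germ_at_const by blast
  show "germ_eq_on Y y s (\<lambda>z i. \<Sum>j<1::nat. 1 * s z i)"
    unfolding germ_eq_on_def by (rule exI[of _ UNIV]) simp
qed

lemma mat_apply_gen_mod:
  assumes C: "germ_matrix J y C" and S: "mat_apply C ` S \<subseteq> S'"
    and g: "g \<in> gen_mod J Y y S"
  shows "mat_apply C g \<in> gen_mod J Y y S'"
proof -
  obtain k :: nat and b G where bG: "\<forall>l<k. germ_at J y (b l) \<and> G l \<in> S"
    and "germ_eq_on Y y g (\<lambda>z i. \<Sum>l<k. b l z * G l z i)"
    using g unfolding gen_mod_def mem_Collect_eq by blast
  then obtain U where U: "open U" "y \<in> U" "\<forall>z\<in>U \<inter> Y. g z = (\<lambda>i. \<Sum>l<k. b l z * G l z i)"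
    unfolding germ_eq_on_def by blast
  have eq: "germ_eq_on Y y (mat_apply C g) (\<lambda>z j. \<Sum>l<k. b l z * mat_apply C (G l) z j)"
    unfolding germ_eq_on_def
  proof (intro exI[of _ U] conjI ballI U(1) U(2))
    fix z assume "z \<in> U \<inter> Y"
    then show "mat_apply C g z = (\<lambda>j. \<Sum>l<k. b l z * mat_apply C (G l) z j)"
      using U(3) by (intro mat_apply_lincomb) blast
  qed
  have vg: "vgerm_at J y (mat_apply C g)"
    using g C unfolding gen_mod_def by (blast intro: vgerm_at_mat_apply)
  have coeff: "\<forall>l<k. germ_at J y (b l) \<and> mat_apply C (G l) \<in> S'"
    using bG S by blast
  show ?thesis
    unfolding gen_mod_def mem_Collect_eq
    by (intro conjI exI[of _ k] exI[of _ b] exI[of _ "\<lambda>l. mat_apply C (G l)"] vg coeff eq)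
qed

lemma mat_apply_int_cl:
  assumes C: "germ_matrix J y C" and N: "mat_apply C ` N \<subseteq> N'"
    and h: "h \<in> int_cl J Y y N"
  shows "mat_apply C h \<in> int_cl J Y y N'"
  unfolding int_cl_def mem_Collect_eq
proof (intro conjI allI impI)
  show "vgerm_at J y (mat_apply C h)"
    using h C unfolding int_cl_def by (blast intro: vgerm_at_mat_apply)
  fix \<phi> assume "curve_at J Y y \<phi>"
  then obtain k :: nat and a g
    where ag: "\<forall>j<k. (\<exists>U. open U \<and> 0 \<in> U \<and> a j holomorphic_on U) \<and> g j \<in> N"
      and ev: "\<forall>\<^sub>F t in nhds 0. \<forall>i. h (\<phi> t) i = (\<Sum>j<k. a j t * g j (\<phi> t) i)"
    using h unfolding int_cl_def by blast
  have ev': "\<forall>\<^sub>F t in nhds 0. \<forall>i.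
      mat_apply C h (\<phi> t) i = (\<Sum>j<k. a j t * mat_apply C (g j) (\<phi> t) i)"
    using ev
  proof eventually_elim
    case (elim t)
    then have "h (\<phi> t) = (\<lambda>i. \<Sum>j<k. a j t * g j (\<phi> t) i)"
      by (simp add: fun_eq_iff)
    from mat_apply_lincomb[where C=C and F=h and G=g and w="\<phi> t", OF this] show ?case
      by simp
  qed
  have coeff: "\<forall>j<k. (\<exists>U. open U \<and> 0 \<in> U \<and> a j holomorphic_on U) \<and> mat_apply C (g j) \<in> N'"
    using ag N by blast
  show "\<exists>(k::nat) a g. (\<forall>j<k. (\<exists>U. open U \<and> 0 \<in> U \<and> a j holomorphic_on U) \<and> g j \<in> N') \<and>
      (\<forall>\<^sub>F t in nhds 0. \<forall>i. mat_apply C h (\<phi> t) i = (\<Sum>j<k. a j t * g j (\<phi> t) i))"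
    by (intro exI[of _ k] exI[of _ a] exI[of _ "\<lambda>j. mat_apply C (g j)"] conjI coeff ev')
qed

lemma lip_sat_eq_M_S1: "lip_sat X x I = M_S1 X x I"
  by (simp add: lip_sat_def M_S1_def)

lemma mat_apply_M_S1:
  fixes C :: "complex^'n \<Rightarrow> 'q::finite \<Rightarrow> 'p::finite \<Rightarrow> complex"
  assumes C: "germ_matrix cJ x C" and M: "\<forall>m\<in>M. vgerm_at cJ x m" and h: "h \<in> M_S1 X x M"
  shows "mat_apply C h \<in> M_S1 X x (gen_mod cJ X x (mat_apply C ` M))"
proof -
  define I where "I = gen_mod cJ X x (mat_apply C ` M)"
  have D: "germ_matrix cJ2 (x, x) (dbl_mat C)"
    using germ_matrix_dbl_mat[OF C] .
  have "mat_apply C m \<in> I" if "m \<in> M" for m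
    unfolding I_def using that M by (intro gen_mod_generator imageI vgerm_at_mat_apply[OF C]) auto
  then have "mat_apply (dbl_mat C) ` dbl ` M \<subseteq> dbl ` I"
    unfolding image_image dbl_mat_apply[symmetric] by blast
  then have "mat_apply (dbl_mat C) ` gen_mod cJ2 (X \<times> X) (x, x) (dbl ` M)
      \<subseteq> gen_mod cJ2 (X \<times> X) (x, x) (dbl ` I)"
    using mat_apply_gen_mod[OF D] by blast
  moreover have "dbl h \<in> int_cl cJ2 (X \<times> X) (x, x) (gen_mod cJ2 (X \<times> X) (x, x) (dbl ` M))"
    using h unfolding M_S1_def by blast
  ultimately have "dbl (mat_apply C h) \<in> int_cl cJ2 (X \<times> X) (x, x) (gen_mod cJ2 (X \<times> X) (x, x) (dbl ` I))"
    unfolding dbl_mat_apply by (rule mat_apply_int_cl[OF D])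
  moreover have "vgerm_at cJ x (mat_apply C h)"
    using h C unfolding M_S1_def by (blast intro: vgerm_at_mat_apply)
  ultimately show ?thesis
    unfolding M_S1_def I_def by blast
qed

theorem proposition2p8:
  fixes X :: "(complex^'n) set" and x :: "complex^'n"
    and M :: "(complex^'n \<Rightarrow> 'p::finite \<Rightarrow> complex) set"
  assumes "analytic_variety X" and "x \<in> X" and "is_submodule cJ X x M"
  shows "M_S1 X x M \<subseteq> M_S2 X x M"
proof
  fix h assume h: "h \<in> M_S1 X x M"
  have M: "\<forall>m\<in>M. vgerm_at cJ x m"
    using assms(3) unfolding is_submodule_def by blast
  have "pdot \<psi> h \<in> lip_sat X x (gen_mod cJ X x (pdot \<psi> ` M))" if "vgerm_at cJ x \<psi>" for \<psi>
  proof -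
    have "germ_matrix cJ x (\<lambda>z (_::unit). \<psi> z)"
      using that unfolding germ_matrix_def vgerm_at_def by simp
    from mat_apply_M_S1[OF this M h] show ?thesis
      unfolding lip_sat_eq_M_S1 pdot_eq_mat_apply .
  qed
  moreover have "vgerm_at cJ x h"
    using h unfolding M_S1_def by blast
  ultimately show "h \<in> M_S2 X x M"
    unfolding M_S2_def by blast
qed

end
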